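(* Let $x\in[0,1]\setminus\mathcal E$. Then for every $n\ge0$, $x\in I_n(x)$, where $I_n(x)$ is the open interval with endpoints $a_n(x)$ and $b_n(x)=a_n(x)+\varepsilon_n(x)\ell_n(x)$. Moreover, the sign of the slope of $T^n$ on $I_n(x)$ is $\varepsilon_n(x)$, $T^n(a_n(x))=0$, and $T^n$ maps $I_n(x)$ onto $(0,1)$.
   Context: $T:[0,1]\to[0,1]$ is $T(x)=3x$ on $[0,\frac13)$, $6x-2$ on $[\frac13,\frac12)$, $4-6x$ on $[\frac12,\frac23)$, $3x-2$ on $[\frac23,1]$. Let $U(x)=0,1,2,3$ and $\widetilde U(x)=0,\frac13,\frac23,\frac23$ on these four intervals respectively. For $x\in[0,1]$, $n\ge0$: $u_n(x)=U(T^nx)$, $\widetilde u_n(x)=\widetilde U(T^nx)$; $\beta_i(x,n)=\#\{k<n:u_k(x)=i\}$, $\beta_{i,j}(x,n)=\beta_i(x,n)+\beta_j(x,n)$; $\varepsilon_n(x)=(-1)^{\beta_2(x,n)}$, $\ell_n(x)=3^{-\beta_{0,3}(x,n)}6^{-\beta_{1,2}(x,n)}$, $a_0(x)=0$ and $a_n(x)=\sum_{k=0}^{n-1}\widetilde u_k(x)\varepsilon_k(x)\ell_k(x)$ for $n\ge1$. $\mathcal E$ is the set of $x\in[0,1]$ whose sequence $(u_n(x))_n$ is eventually constant equal to $0$ or eventually constant equal to $3$. The open interval with endpoints $a,b$ means the set of points strictly between $a$ and $b$ (even if $b<a$). *)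

theory Defs
  imports Complex_Main
begin

definition T :: "real \<Rightarrow> real" where
  "T x = (if x < 1/3 then 3*x
          else if x < 1/2 then 6*x - 2
          else if x < 2/3 then 4 - 6*x
          else 3*x - 2)"

definition U :: "real \<Rightarrow> nat" where
  "U x = (if x < 1/3 then 0 else if x < 1/2 then 1 else if x < 2/3 then 2 else 3)"

definition Ut :: "real \<Rightarrow> real" where
  "Ut x = (if x < 1/3 then 0 else if x < 1/2 then 1/3 else 2/3)"

definition u :: "nat \<Rightarrow> real \<Rightarrow> nat" where
  "u n x = U ((T ^^ n) x)"

definition ut :: "nat \<Rightarrow> real \<Rightarrow> real" where
  "ut n x = Ut ((T ^^ n) x)"

definition beta :: "nat \<Rightarrow> real \<Rightarrow> nat \<Rightarrow> nat" where
  "beta i x n = card {k. k < n \<and> u k x = i}"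

definition eps :: "real \<Rightarrow> nat \<Rightarrow> real" where
  "eps x n = (-1) ^ beta 2 x n"

definition ell :: "real \<Rightarrow> nat \<Rightarrow> real" where
  "ell x n = (1/3) ^ (beta 0 x n + beta 3 x n) * (1/6) ^ (beta 1 x n + beta 2 x n)"

definition a :: "real \<Rightarrow> nat \<Rightarrow> real" where
  "a x n = (\<Sum>k<n. ut k x * eps x k * ell x k)"

definition b :: "real \<Rightarrow> nat \<Rightarrow> real" where
  "b x n = a x n + eps x n * ell x n"

definition open_between :: "real \<Rightarrow> real \<Rightarrow> real set" where
  "open_between p q = {min p q <..< max p q}"

definition I :: "nat \<Rightarrow> real \<Rightarrow> real set" where
  "I n x = open_between (a x n) (b x n)"

definition E :: "real set" where
  "E = {x \<in> {0..1}. (\<exists>N. \<forall>n\<ge>N. u n x = 0) \<or> (\<exists>N. \<forall>n\<ge>N. u n x = 3)}"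

end

theory Submission
  imports Defs
begin

text \<open>
  Every branch of \<open>T\<close> has an affine inverse \<open>inv_branch\<close> mapping \<open>[0,1)\<close> into \<open>[0,1)\<close>.
  Composing these inverse branches along the itinerary of \<open>x\<close> gives the affine parametrisation
  \<open>t \<mapsto> a x n + t * eps x n * ell x n\<close> of \<open>I n x\<close> by \<open>(0,1)\<close>, and \<open>T^n\<close> undoes it. Applied to
  the orbit of \<open>x\<close>, the same inverse branches recover \<open>x\<close> as the parameter value \<open>T^n x\<close>,
  which lies in \<open>(0,1)\<close> because \<open>0\<close> and \<open>1\<close> are fixed points of \<open>T\<close> with digits \<open>0\<close> and \<open>3\<close>,
  so the orbit of a point outside \<open>E\<close> never reaches them.
\<close>

definition digit_slope :: "nat \<Rightarrow> real" where
  "digit_slope i = (if i = 1 then 1/6 else if i = 2 then -1/6 else 1/3)"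

definition inv_branch :: "real \<Rightarrow> real \<Rightarrow> real" where
  "inv_branch y t = Ut y + digit_slope (U y) * t"

definition chart :: "real \<Rightarrow> nat \<Rightarrow> real \<Rightarrow> real" where
  "chart x n t = a x n + t * eps x n * ell x n"

lemma T_inv_branch:
  assumes "0 \<le> t" "t < 1"
  shows "T (inv_branch y t) = t"
  using assms by (auto simp: inv_branch_def digit_slope_def T_def U_def Ut_def)

lemma inv_branch_T: "inv_branch y (T y) = y"
  by (auto simp: inv_branch_def digit_slope_def T_def U_def Ut_def field_simps)

lemma inv_branch_range:
  assumes "0 \<le> t" "t < 1"
  shows "0 \<le> inv_branch y t \<and> inv_branch y t < 1"
  using assms by (auto simp: inv_branch_def digit_slope_def U_def Ut_def)

lemma T_atLeastAtMost: "T ` {0..1} \<subseteq> {0..1}"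
  by (auto simp: T_def)

lemma funpow_T_atLeastAtMost: "x \<in> {0..1} \<Longrightarrow> (T ^^ n) x \<in> {0..1}"
  by (induction n) (use T_atLeastAtMost in \<open>auto simp: image_subset_iff\<close>)

lemma funpow_fixpoint: "f c = c \<Longrightarrow> (f ^^ n) c = c"
  by (induction n) auto

lemma u_eventually_const_of_fixpoint:
  assumes "(T ^^ m) x = c" "T c = c"
  shows "\<forall>k\<ge>m. u k x = U c"
proof (intro allI impI)
  fix k assume "m \<le> k"
  then have "(T ^^ k) x = (T ^^ (k - m)) ((T ^^ m) x)"
    by (metis funpow_add comp_apply le_add_diff_inverse2)
  then show "u k x = U c"
    using assms funpow_fixpoint[of T c] by (simp add: u_def)
qed

lemma funpow_T_greaterThanLessThan:
  assumes "x \<in> {0..1} - E"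
  shows "(T ^^ n) x \<in> {0<..<1}"
proof -
  have "(T ^^ n) x \<noteq> c" if "T c = c" "U c = 0 \<or> U c = 3" for c
  proof
    assume "(T ^^ n) x = c"
    then have "\<exists>N. \<forall>k\<ge>N. u k x = U c"
      using u_eventually_const_of_fixpoint that(1) by blast
    then show False
      using that(2) assms unfolding E_def by fastforce
  qed
  moreover have "T 0 = 0" "U 0 = 0" "T 1 = 1" "U 1 = 3"
    by (simp_all add: T_def U_def)
  ultimately show ?thesis
    using funpow_T_atLeastAtMost[of x n] assms by force
qed

lemma beta_Suc: "beta i x (Suc n) = beta i x n + (if u n x = i then 1 else 0)"
proof -
  have "{k. k < Suc n \<and> u k x = i} =
      (if u n x = i then insert n else id) {k. k < n \<and> u k x = i}"
    by (auto simp: less_Suc_eq)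
  then show ?thesis
    by (simp add: beta_def)
qed

lemma eps_ell_Suc: "eps x (Suc n) * ell x (Suc n) = eps x n * ell x n * digit_slope (u n x)"
proof -
  have "u n x \<in> {0, 1, 2, 3}"
    by (simp add: u_def U_def)
  then show ?thesis
    by (auto simp: eps_def ell_def beta_Suc digit_slope_def)
qed

lemma chart_0 [simp]: "chart x 0 t = t"
  by (simp add: chart_def a_def eps_def ell_def beta_def)

lemma chart_Suc: "chart x (Suc n) t = chart x n (inv_branch ((T ^^ n) x) t)"
proof -
  have "chart x (Suc n) t = a x n + (ut n x + digit_slope (u n x) * t) * eps x n * ell x n"
    unfolding chart_def mult.assoc[of t] eps_ell_Suc by (simp add: a_def algebra_simps)
  then show ?thesis
    by (simp add: chart_def inv_branch_def u_def ut_def)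
qed

lemma funpow_T_chart:
  assumes "0 \<le> t" "t < 1"
  shows "(T ^^ n) (chart x n t) = t"
  using assms
proof (induction n arbitrary: t)
  case (Suc n)
  then show ?case
    by (simp add: chart_Suc T_inv_branch inv_branch_range)
qed simp

lemma chart_funpow_T: "chart x n ((T ^^ n) x) = x"
  by (induction n) (simp_all add: chart_Suc inv_branch_T)

lemma eps_cases: "eps x n = 1 \<or> eps x n = -1"
  by (cases "even (beta 2 x n)") (simp_all add: eps_def)

lemma ell_pos: "ell x n > 0"
  by (simp add: ell_def)

lemma open_between_eq_image:
  fixes p c :: real
  assumes "c \<noteq> 0"
  shows "open_between p (p + c) = (\<lambda>t. p + t * c) ` {0<..<1}"
proof (intro equalityI subsetI)
  have mem: "y \<in> open_between p (p + c) \<longleftrightarrow> (y - p) / c \<in> {0<..<1}" for y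
    using assms by (cases "c > 0") (auto simp: open_between_def divide_simps)
  fix y
  show "y \<in> (\<lambda>t. p + t * c) ` {0<..<1}" if "y \<in> open_between p (p + c)"
  proof (rule image_eqI)
    show "y = p + ((y - p) / c) * c"
      using assms by simp
    show "(y - p) / c \<in> {0<..<1}"
      using that mem by simp
  qed
  show "y \<in> open_between p (p + c)" if img: "y \<in> (\<lambda>t. p + t * c) ` {0<..<1}"
  proof -
    obtain t where "t \<in> {0<..<1}" "y = p + t * c"
      using img by blast
    then show ?thesis
      using mem[of y] assms by simp
  qed
qed

lemma I_eq_chart_image: "I n x = chart x n ` {0<..<1}"
proof -
  have "eps x n * ell x n \<noteq> 0"
    using eps_cases[of x n] ell_pos[of x n] by auto
  then show ?thesis
    unfolding I_def b_def chart_def mult.assoc by (rule open_between_eq_image)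
qed

lemma funpow_T_on_I:
  assumes "y \<in> I n x"
  shows "(T ^^ n) y = (y - a x n) / (eps x n * ell x n)"
proof -
  obtain t where t: "t \<in> {0<..<1}" "y = chart x n t"
    using assms unfolding I_eq_chart_image by blast
  then have "(y - a x n) / (eps x n * ell x n) = t"
    using eps_cases[of x n] ell_pos[of x n] by (auto simp: chart_def)
  then show ?thesis
    using t funpow_T_chart[of t n x] by simp
qed

lemma funpow_T_image_I: "(T ^^ n) ` I n x = {0<..<1}"
  by (force simp: I_eq_chart_image image_comp funpow_T_chart)

theorem proposition2p3:
  fixes x :: real and n :: nat
  assumes "x \<in> {0..1} - E"
  shows "x \<in> I n x
    \<and> (\<exists>s::real. sgn s = eps x n \<and>
          (\<forall>y \<in> I n x. (T ^^ n) y = (T ^^ n) (a x n) + s * (y - a x n)))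
    \<and> (T ^^ n) (a x n) = 0
    \<and> (T ^^ n) ` I n x = {0<..<1}"
proof (intro conjI funpow_T_image_I)
  show "x \<in> I n x"
    using chart_funpow_T[of x n] funpow_T_greaterThanLessThan[OF assms]
    unfolding I_eq_chart_image by (metis image_eqI)
  show T_a: "(T ^^ n) (a x n) = 0"
    using funpow_T_chart[of 0 n x] by (simp add: chart_def)
  show "\<exists>s::real. sgn s = eps x n \<and>
      (\<forall>y \<in> I n x. (T ^^ n) y = (T ^^ n) (a x n) + s * (y - a x n))"
  proof (rule exI[of _ "1 / (eps x n * ell x n)"], intro conjI ballI)
    show "sgn (1 / (eps x n * ell x n)) = eps x n"
      using eps_cases[of x n] ell_pos[of x n] by auto
    show "(T ^^ n) y = (T ^^ n) (a x n) + 1 / (eps x n * ell x n) * (y - a x n)"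
      if "y \<in> I n x" for y
      using that by (simp add: funpow_T_on_I T_a)
  qed
qed

end
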